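(* Let $(Z_{n}')_{n\ge 0}$ be a branching process in iid random environment (BPRE) with $Z_\varnothing$ ancestors and iid environmental sequence $\Lambda:=(\Lambda_{n})_{n\ge 0}$ taking values in $\{\mathcal{L}(X^{(j,k)})\,|\,1\le j\le k<\infty\}$ and such that \begin{equation*} \mathbb{P}\left(\Lambda_{0}=\mathcal{L}(X^{(j,k)})\right)=\frac{p_{k}}{\nu} \end{equation*} for all $1\le j\le k<\infty$. Then $(Z_{V_{n}})_{n\ge 0}$ and $(Z_{n}')_{n\ge 0}$ are equal in law.
   Context: Branching-within-branching process: cells form a Galton-Watson tree $\mathbb{T}$ in the Ulam-Harris tree $\mathbb{V}$ (root $\varnothing$), where cell $\mathsf{v}$ has $N_{\mathsf{v}}$ daughter cells, the $N_{\mathsf{v}}$ being iid copies of $N$ with $\mathbb{P}(N=k)=p_k$ and finite mean $\nu=\mathbb{E}N$. For each $k\in\mathbb{N}$, $X^{(\bullet,k)}_{i,\mathsf{v}}=(X^{(1,k)}_{i,\mathsf{v}},\dots,X^{(k,k)}_{i,\mathsf{v}})$, $i\in\mathbb{N}$, $\mathsf{v}\in\mathbb{V}$, are iid copies of an $\mathbb{N}_0^k$-valued random vector $X^{(\bullet,k)}=(X^{(1,k)},\dots,X^{(k,k)})$; these families are mutually independent over $k$ and independent of $(N_{\mathsf{v}})$. $X^{(j,k)}_{i,\mathsf{v}}$ is the number of offspring of the $i$-th parasite in cell $\mathsf{v}$ sent to daughter cell $\mathsf{v}j$ when $\mathsf{v}$ has $k$ daughters. The number of parasites $Z_{\mathsf{v}}$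 in cell $\mathsf{v}$ satisfies $Z_\varnothing$ given and $Z_{\mathsf{v}j}=\sum_{i=1}^{Z_{\mathsf{v}}}X^{(j,N_{\mathsf{v}})}_{i,\mathsf{v}}$ (with $X^{(j,k)}:=0$ for $j>k$). Assume $0<\gamma:=\sum_{k\ge1}p_k\sum_{j=1}^k\mathbb{E}X^{(j,k)}<\infty$. Random cell line (spine): let $(C_n,T_n)_{n\ge0}$ be iid, independent of $(N_{\mathsf{v}})$ and of all $X^{(\bullet,k)}_{i,\mathsf{v}}$, with $\mathbb{P}(T_n=k)=kp_k/\nu$ (size-biased law of $N$) and $\mathbb{P}(C_n=l\,|\,T_n=k)=1/k$ for $1\le l\le k$. Set $V_0=\varnothing$ and $V_n=V_{n-1}C_{n-1}$ for $n\ge1$. Along this line the parasite numbers satisfy $Z_{V_{n+1}}=\sum_{i=1}^{Z_{V_n}}X^{(C_n,T_n)}_{i,V_n}$. *)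

theory Defs
  imports "HOL-Probability.Probability"
begin

text \<open>Component j (1-based) of an offspring vector of length k; 0 if j is out of range
  (convention X^(j,k) := 0 for j > k).\<close>
definition xcomp :: "nat list \<Rightarrow> nat \<Rightarrow> nat" where
  "xcomp xs j = (if 1 \<le> j \<and> j \<le> length xs then xs ! (j - 1) else 0)"

definition marg :: "(nat \<Rightarrow> nat list pmf) \<Rightarrow> nat \<Rightarrow> nat \<Rightarrow> nat pmf" where
  "marg Xlaw j k = map_pmf (\<lambda>xs. xcomp xs j) (Xlaw k)"

definition gamma :: "nat pmf \<Rightarrow> (nat \<Rightarrow> nat list pmf) \<Rightarrow> ennreal" where
  "gamma p Xlaw = (\<Sum>k. ennreal (pmf p k) *
      (\<Sum>j\<in>{1..k}. \<integral>\<^sup>+ xs. ennreal (real (xcomp xs j)) \<partial>measure_pmf (Xlaw k)))"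

text \<open>The family of all basic random elements (offspring vectors X^(.,k)_{i,v} and
  spine choices (C_n,T_n)), indexed by a sum type, for stating mutual independence.\<close>
fun allvars :: "(nat \<Rightarrow> nat \<Rightarrow> nat list \<Rightarrow> 'a \<Rightarrow> nat list) \<Rightarrow> (nat \<Rightarrow> 'a \<Rightarrow> nat \<times> nat)
     \<Rightarrow> (nat \<times> nat \<times> nat list) + nat \<Rightarrow> 'a \<Rightarrow> nat list + (nat \<times> nat)" where
  "allvars X CT (Inl (k, i, v)) = (\<lambda>\<omega>. Inl (X k i v \<omega>))"
| "allvars X CT (Inr n) = (\<lambda>\<omega>. Inr (CT n \<omega>))"

text \<open>Random cell line: V_0 = root, V_{n+1} = V_n C_n (Ulam-Harris words).\<close>
primrec spineV :: "(nat \<Rightarrow> 'a \<Rightarrow> nat \<times> nat) \<Rightarrow> nat \<Rightarrow> 'a \<Rightarrow> nat list" where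
  "spineV CT 0 \<omega> = []"
| "spineV CT (Suc n) \<omega> = spineV CT n \<omega> @ [fst (CT n \<omega>)]"

primrec spineZ :: "nat \<Rightarrow> (nat \<Rightarrow> nat \<Rightarrow> nat list \<Rightarrow> 'a \<Rightarrow> nat list)
     \<Rightarrow> (nat \<Rightarrow> 'a \<Rightarrow> nat \<times> nat) \<Rightarrow> nat \<Rightarrow> 'a \<Rightarrow> nat" where
  "spineZ z0 X CT 0 \<omega> = z0"
| "spineZ z0 X CT (Suc n) \<omega> =
     (\<Sum>i\<in>{1..spineZ z0 X CT n \<omega>}. xcomp (X (snd (CT n \<omega>)) i (spineV CT n \<omega>) \<omega>) (fst (CT n \<omega>)))"

primrec sum_iid :: "nat pmf \<Rightarrow> nat \<Rightarrow> nat pmf" where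
  "sum_iid l 0 = return_pmf 0"
| "sum_iid l (Suc m) = bind_pmf l (\<lambda>a. map_pmf ((+) a) (sum_iid l m))"

primrec iid_list :: "'b pmf \<Rightarrow> nat \<Rightarrow> 'b list pmf" where
  "iid_list e 0 = return_pmf []"
| "iid_list e (Suc n) = bind_pmf e (\<lambda>x. map_pmf (Cons x) (iid_list e n))"

fun gw_varying :: "nat pmf list \<Rightarrow> nat \<Rightarrow> nat list pmf" where
  "gw_varying [] z = return_pmf [z]"
| "gw_varying (l # ls) z = bind_pmf (sum_iid l z) (\<lambda>y. map_pmf (Cons z) (gw_varying ls y))"

text \<open>BPRE with iid environment of law e and z0 ancestors: (annealed) law of the path
  (Z'_0,...,Z'_n): draw the environment Lambda_0..Lambda_{n-1} iid, then run the GW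
  process in that environment.\<close>
definition bpre_law :: "nat pmf pmf \<Rightarrow> nat \<Rightarrow> nat \<Rightarrow> nat list pmf" where
  "bpre_law e z0 n = bind_pmf (iid_list e n) (\<lambda>ls. gw_varying ls z0)"

end

theory Submission
  imports Defs
begin

(*
  Along the spine, the choice (C_n, T_n) and the offspring vectors of the cell V_n of depth n are
  independent of everything that determines V_n and (Z_{V_0}, ..., Z_{V_n}): the offspring vectors
  of cells of depth < n and the earlier choices. So, given that this path ends in z, Z_{V_{n+1}}
  is a sum of z iid copies of X^(C_n,T_n), whose law is drawn afresh, with the law of
  L(X^(C_n,T_n)), at every generation. This is exactly the transition of the BPRE, and the
  probability of every path (z_0, ..., z_n) is computed by induction on n.
*)

lemma measurable_count_space_Pair:
  fixes f :: "'a \<Rightarrow> 'b::countable" and g :: "'a \<Rightarrow> 'c::countable"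
  assumes "f \<in> measurable N (count_space UNIV)" "g \<in> measurable N (count_space UNIV)"
  shows "(\<lambda>x. (f x, g x)) \<in> measurable N (count_space UNIV)"
proof -
  have "(\<lambda>x. (f x, g x)) -` {(a, b)} \<inter> space N = (f -` {a} \<inter> space N) \<inter> (g -` {b} \<inter> space N)"
    for a b by auto
  then show ?thesis
    using assms by (auto simp: measurable_count_space_eq2_countable intro!: sets.Int)
qed

lemma measurable_count_space_comp:
  "f \<in> measurable N (count_space UNIV) \<Longrightarrow> (\<lambda>x. h (f x)) \<in> measurable N (count_space UNIV)"
  using measurable_compose[of f N "count_space UNIV" h "count_space UNIV"] by simp

lemma measurable_count_space_sum:
  fixes f :: "'i \<Rightarrow> 'a \<Rightarrow> nat"
  assumes "finite A" "\<And>i. i \<in> A \<Longrightarrow> f i \<in> measurable N (count_space UNIV)"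
  shows "(\<lambda>x. \<Sum>i\<in>A. f i x) \<in> measurable N (count_space UNIV)"
  using assms
proof (induction A rule: finite_induct)
  case (insert a A)
  then have "(\<lambda>x. (f a x, \<Sum>i\<in>A. f i x)) \<in> measurable N (count_space UNIV)"
    by (intro measurable_count_space_Pair) auto
  from measurable_count_space_comp[OF this, of "\<lambda>(u, v). u + v"] insert(1,2) show ?case
    by simp
qed simp

lemma measurable_count_space_map:
  fixes f :: "'i \<Rightarrow> 'a \<Rightarrow> 'b::countable"
  assumes "\<And>i. i \<in> set xs \<Longrightarrow> f i \<in> measurable N (count_space UNIV)"
  shows "(\<lambda>x. map (\<lambda>i. f i x) xs) \<in> measurable N (count_space UNIV)"
  using assms
proof (induction xs)
  case (Cons a xs)
  then have "(\<lambda>x. (f a x, map (\<lambda>i. f i x) xs)) \<in> measurable N (count_space UNIV)"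
    by (intro measurable_count_space_Pair) auto
  from measurable_count_space_comp[OF this, of "\<lambda>(u, v). u # v"] show ?case
    by simp
qed simp

lemma sets_Collect_count_space:
  assumes "f \<in> measurable N (count_space UNIV)"
  shows "{x \<in> space N. P (f x)} \<in> sets N"
proof -
  have "{x \<in> space N. P (f x)} = f -` {s. P s} \<inter> space N" by auto
  then show ?thesis using measurable_sets[OF assms, of "{s. P s}"] by simp
qed

lemma (in prob_space) distr_count_space_eq_embed_pmf:
  fixes f :: "'a \<Rightarrow> 'b::countable"
  assumes f: "f \<in> measurable M (count_space UNIV)"
    and w: "\<And>x. measure M {\<omega> \<in> space M. f \<omega> = x} = w x"
  shows "distr M (count_space UNIV) f = measure_pmf (embed_pmf w)"
    and "pmf (embed_pmf w) x = w x"
proof -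
  have events: "{\<omega> \<in> space M. f \<omega> = x} \<in> sets M" for x
    using sets_Collect_count_space[OF f] .
  have "(\<integral>\<^sup>+x. ennreal (w x) \<partial>count_space UNIV) = emeasure M (\<Union>x. {\<omega> \<in> space M. f \<omega> = x})"
    using events
    by (subst emeasure_UN_countable) (auto simp: emeasure_eq_measure disjoint_family_on_def simp flip: w)
  also have "(\<Union>x. {\<omega> \<in> space M. f \<omega> = x}) = space M" by blast
  finally have pmf_w: "pmf (embed_pmf w) x = w x" for x
    by (intro pmf_embed_pmf) (simp_all add: emeasure_space_1 flip: w)
  then show "pmf (embed_pmf w) x = w x" .
  show "distr M (count_space UNIV) f = measure_pmf (embed_pmf w)"
  proof (rule measure_eqI_countable[where A=UNIV])
    fix x
    have "f -` {x} \<inter> space M = {\<omega> \<in> space M. f \<omega> = x}" by blast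
    then show "emeasure (distr M (count_space UNIV) f) {x} = emeasure (measure_pmf (embed_pmf w)) {x}"
      using f by (simp add: emeasure_distr emeasure_pmf_single pmf_w emeasure_eq_measure flip: w)
  qed simp_all
qed

lemma map_pmf_eq_of_weights:
  assumes Q: "\<And>x. pmf Q x = (if P x then w x else 0)"
    and e: "\<And>y. pmf e y = (\<Sum>\<^sub>\<infinity>x \<in> {x. P x \<and> g x = y}. w x)"
  shows "e = map_pmf g Q"
proof (rule pmf_eqI)
  fix y
  have "pmf (map_pmf g Q) y = (\<Sum>\<^sub>\<infinity>x \<in> g -` {y}. pmf Q x)"
    by (simp add: pmf_map measure_pmf_conv_infsetsum infsetsum_infsum pmf_abs_summable)
  also have "\<dots> = (\<Sum>\<^sub>\<infinity>x \<in> {x. P x \<and> g x = y}. w x)"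
    by (rule infsum_cong_neutral) (auto simp: Q)
  finally show "pmf e y = pmf (map_pmf g Q) y" by (simp add: e)
qed

lemma gw_varying_not_Nil: "zs \<in> set_pmf (gw_varying ls z) \<Longrightarrow> zs \<noteq> []"
  by (induction ls arbitrary: z zs) auto

lemma iid_list_Suc_snoc:
  "iid_list e (Suc n) = bind_pmf (iid_list e n) (\<lambda>ls. map_pmf (\<lambda>x. ls @ [x]) e)"
proof (induction n)
  case 0
  then show ?case by (simp add: bind_return_pmf map_pmf_def)
next
  case (Suc n)
  have "iid_list e (Suc (Suc n)) = bind_pmf e (\<lambda>x. map_pmf (Cons x) (iid_list e (Suc n)))"
    by simp
  also have "\<dots> = bind_pmf e (\<lambda>x. map_pmf (Cons x)
      (bind_pmf (iid_list e n) (\<lambda>ls. map_pmf (\<lambda>y. ls @ [y]) e)))"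
    by (simp only: Suc)
  also have "\<dots> = bind_pmf (iid_list e (Suc n)) (\<lambda>ls. map_pmf (\<lambda>x. ls @ [x]) e)"
    by (simp add: map_bind_pmf bind_map_pmf bind_assoc_pmf map_pmf_comp o_def)
  finally show ?case .
qed

lemma gw_varying_snoc:
  "gw_varying (ls @ [l]) z =
    bind_pmf (gw_varying ls z) (\<lambda>zs. map_pmf (\<lambda>y. zs @ [y]) (sum_iid l (last zs)))"
proof (induction ls arbitrary: z)
  case Nil
  then show ?case by (simp add: bind_return_pmf map_pmf_def)
next
  case (Cons a ls)
  have "gw_varying ((a # ls) @ [l]) z =
      bind_pmf (sum_iid a z) (\<lambda>y. map_pmf (Cons z) (gw_varying (ls @ [l]) y))"
    by simp
  also have "\<dots> = bind_pmf (sum_iid a z) (\<lambda>y. map_pmf (Cons z)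
      (bind_pmf (gw_varying ls y) (\<lambda>zs. map_pmf (\<lambda>w. zs @ [w]) (sum_iid l (last zs)))))"
    by (simp only: Cons)
  also have "\<dots> = bind_pmf (sum_iid a z) (\<lambda>y. bind_pmf (gw_varying ls y) (\<lambda>zs.
      map_pmf (\<lambda>w. (z # zs) @ [w]) (sum_iid l (last (z # zs)))))"
    by (intro bind_pmf_cong refl)
      (auto simp: map_bind_pmf map_pmf_comp o_def dest: gw_varying_not_Nil intro!: bind_pmf_cong)
  also have "\<dots> = bind_pmf (gw_varying (a # ls) z)
      (\<lambda>zs. map_pmf (\<lambda>y. zs @ [y]) (sum_iid l (last zs)))"
    by (simp add: bind_map_pmf bind_assoc_pmf)
  finally show ?case .
qed

lemma bpre_law_Suc:
  "bpre_law e z0 (Suc n) = bind_pmf (bpre_law e z0 n)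
     (\<lambda>zs. map_pmf (\<lambda>y. zs @ [y]) (bind_pmf e (\<lambda>L. sum_iid L (last zs))))"
proof -
  have "bpre_law e z0 (Suc n) =
      bind_pmf (iid_list e n) (\<lambda>ls. bind_pmf e (\<lambda>l. gw_varying (ls @ [l]) z0))"
    unfolding bpre_law_def iid_list_Suc_snoc by (simp add: bind_map_pmf bind_assoc_pmf)
  also have "\<dots> = bind_pmf (iid_list e n) (\<lambda>ls. bind_pmf e (\<lambda>l. bind_pmf (gw_varying ls z0)
      (\<lambda>zs. map_pmf (\<lambda>y. zs @ [y]) (sum_iid l (last zs)))))"
    by (simp only: gw_varying_snoc)
  also have "\<dots> = bind_pmf (iid_list e n) (\<lambda>ls. bind_pmf (gw_varying ls z0) (\<lambda>zs.
      bind_pmf e (\<lambda>l. map_pmf (\<lambda>y. zs @ [y]) (sum_iid l (last zs)))))"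
    by (subst bind_commute_pmf) (rule refl)
  also have "\<dots> = bind_pmf (bpre_law e z0 n)
      (\<lambda>zs. map_pmf (\<lambda>y. zs @ [y]) (bind_pmf e (\<lambda>L. sum_iid L (last zs))))"
    unfolding bpre_law_def by (simp add: bind_assoc_pmf map_bind_pmf)
  finally show ?thesis .
qed

lemma pmf_bind_snoc:
  "ennreal (pmf (bind_pmf B (\<lambda>ws. map_pmf (\<lambda>y. ws @ [y]) (G ws))) (zs @ [y])) =
   ennreal (pmf B zs) * ennreal (pmf (G zs) y)"
proof -
  have "ennreal (pmf (map_pmf (\<lambda>y. ws @ [y]) (G ws)) (zs @ [y])) =
        ennreal (pmf (G zs) y) * indicator {zs} ws" for ws
  proof (cases "ws = zs")
    case True
    have "inj (\<lambda>y. zs @ [y])" by (auto simp: inj_def)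
    from pmf_map_inj'[OF this] True show ?thesis by simp
  next
    case False
    then have "pmf (map_pmf (\<lambda>y. ws @ [y]) (G ws)) (zs @ [y]) = 0"
      by (intro pmf_map_outside) auto
    with False show ?thesis by simp
  qed
  then have "ennreal (pmf (bind_pmf B (\<lambda>ws. map_pmf (\<lambda>y. ws @ [y]) (G ws))) (zs @ [y])) =
      (\<integral>\<^sup>+ws. ennreal (pmf (G zs) y) * indicator {zs} ws \<partial>measure_pmf B)"
    by (simp add: ennreal_pmf_bind)
  also have "\<dots> = ennreal (pmf (G zs) y) * emeasure (measure_pmf B) {zs}"
    by (rule nn_integral_cmult_indicator) simp
  finally show ?thesis by (simp add: emeasure_pmf_single mult.commute)
qed

lemma pmf_bind_snoc_Nil: "pmf (bind_pmf B (\<lambda>ws. map_pmf (\<lambda>y. ws @ [y]) (G ws))) [] = 0"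
  by (auto simp: pmf_eq_0_set_pmf)

lemma length_spineV: "length (spineV CT n \<omega>) = n"
  by (induction n) auto

locale spine_model = prob_space M for M :: "'a measure" +
  fixes X :: "nat \<Rightarrow> nat \<Rightarrow> nat list \<Rightarrow> 'a \<Rightarrow> nat list"
    and CT :: "nat \<Rightarrow> 'a \<Rightarrow> nat \<times> nat"
    and Xlaw :: "nat \<Rightarrow> nat list pmf"
    and Q :: "(nat \<times> nat) pmf"
  assumes indep_allvars: "indep_vars (\<lambda>_. count_space UNIV) (allvars X CT) UNIV"
    and distr_X: "\<And>k i v. distr M (count_space UNIV) (X k i v) = measure_pmf (Xlaw k)"
    and distr_CT: "\<And>n. distr M (count_space UNIV) (CT n) = measure_pmf Q"
begin

definition env :: "nat pmf pmf" where
  "env = map_pmf (\<lambda>(l, k). marg Xlaw l k) Q"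

definition var_events :: "(nat \<times> nat \<times> nat list) + nat \<Rightarrow> 'a set set" where
  "var_events i = {allvars X CT i -` A \<inter> space M | A. A \<in> sets (count_space UNIV)}"

definition sigma_of :: "((nat \<times> nat \<times> nat list) + nat) set \<Rightarrow> 'a measure" where
  "sigma_of S = sigma (space M) (\<Union>i\<in>S. var_events i)"

lemma var_events_subset: "var_events i \<subseteq> sets M"
  using indep_allvars unfolding indep_vars_def2 var_events_def by (auto intro: measurable_sets)

lemma sets_sigma_of: "sets (sigma_of S) = sigma_sets (space M) (\<Union>i\<in>S. var_events i)"
  unfolding sigma_of_def using var_events_subset sets.sets_into_space
  by (subst sets_measure_of) blast+

lemma space_sigma_of [simp]: "space (sigma_of S) = space M"
  unfolding sigma_of_def using var_events_subset sets.sets_into_space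
  by (subst space_measure_of) blast+

lemma sets_sigma_of_subset: "sets (sigma_of S) \<subseteq> sets M"
  unfolding sets_sigma_of using var_events_subset by (intro sets.sigma_sets_subset) auto

lemma sets_sigma_of_mono: "S \<subseteq> T \<Longrightarrow> sets (sigma_of S) \<subseteq> sets (sigma_of T)"
  unfolding sets_sigma_of by (intro sigma_sets_mono') auto

lemma measurable_sigma_of_M: "f \<in> measurable (sigma_of S) N \<Longrightarrow> f \<in> measurable M N"
  using sets_sigma_of_subset unfolding measurable_def by auto

lemma allvars_measurable_sigma_of:
  "i \<in> S \<Longrightarrow> allvars X CT i \<in> measurable (sigma_of S) (count_space UNIV)"
  unfolding measurable_def sets_sigma_of var_events_def by (auto intro!: sigma_sets.Basic)

lemma X_measurable_sigma_of:
  "Inl (k, i, v) \<in> S \<Longrightarrow> (\<lambda>\<omega>. h (X k i v \<omega>)) \<in> measurable (sigma_of S) (count_space UNIV)"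
  using measurable_count_space_comp[OF allvars_measurable_sigma_of, of "Inl (k, i, v)" S "h \<circ> projl"]
  by simp

lemma CT_measurable_sigma_of:
  "Inr n \<in> S \<Longrightarrow> CT n \<in> measurable (sigma_of S) (count_space UNIV)"
  using measurable_count_space_comp[OF allvars_measurable_sigma_of, of "Inr n" S projr]
  by simp

lemma indep_sigma_of:
  assumes "S \<inter> T = {}" "A \<in> sets (sigma_of S)" "B \<in> sets (sigma_of T)"
  shows "emeasure M (A \<inter> B) = emeasure M A * emeasure M B"
proof -
  have "indep_sets var_events UNIV"
    using indep_allvars unfolding indep_vars_def2 var_events_def by simp
  then have "indep_sets var_events (\<Union>j. case_bool S T j)"
    by (rule indep_sets_mono_index[rotated]) auto
  then have "indep_sets (\<lambda>j. sigma_sets (space M) (\<Union>i\<in>case_bool S T j. var_events i)) UNIV"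
  proof (rule indep_sets_collect_sigma)
    show "Int_stable (var_events i)" for i
      unfolding Int_stable_def var_events_def
    proof safe
      fix A B :: "(nat list + nat \<times> nat) set"
      show "\<exists>C. (allvars X CT i -` A \<inter> space M) \<inter> (allvars X CT i -` B \<inter> space M) =
          allvars X CT i -` C \<inter> space M \<and> C \<in> sets (count_space UNIV)"
        by (intro exI[of _ "A \<inter> B"]) auto
    qed
    show "disjoint_family_on (case_bool S T) UNIV"
      using assms(1) by (auto simp: disjoint_family_on_def split: bool.split)
  qed
  from indep_setsD[OF this, of UNIV "case_bool A B"] assms(2,3)
  have "prob (A \<inter> B) = prob A * prob B"
    by (simp add: sets_sigma_of UNIV_bool Int_commute)
  then show ?thesis
    by (simp add: emeasure_eq_measure ennreal_mult'')
qed

lemma emeasure_add_eq_pmf_bind: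
  fixes f g :: "'a \<Rightarrow> nat"
  assumes "S \<inter> T = {}"
    and f: "f \<in> measurable (sigma_of S) (count_space UNIV)"
    and g: "g \<in> measurable (sigma_of T) (count_space UNIV)"
    and F: "\<And>a. emeasure M {\<omega> \<in> space M. f \<omega> = a} = pmf F a"
    and G: "\<And>b. emeasure M {\<omega> \<in> space M. g \<omega> = b} = pmf G b"
  shows "emeasure M {\<omega> \<in> space M. f \<omega> + g \<omega> = y} =
    pmf (bind_pmf F (\<lambda>a. map_pmf ((+) a) G)) y"
proof -
  define A where "A a = {\<omega> \<in> space M. f \<omega> = a}" for a
  define B where "B a = {\<omega> \<in> space M. a + g \<omega> = y}" for a
  have A: "A a \<in> sets (sigma_of S)" for a
    using sets_Collect_count_space[OF f] unfolding A_def space_sigma_of .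
  have B: "B a \<in> sets (sigma_of T)" for a
    using sets_Collect_count_space[OF g] unfolding B_def space_sigma_of .
  have "emeasure M (B a) = pmf (map_pmf ((+) a) G) y" for a
  proof (cases "a \<le> y")
    case True
    then have "B a = {\<omega> \<in> space M. g \<omega> = y - a}" by (auto simp: B_def)
    moreover have "pmf (map_pmf ((+) a) G) (a + (y - a)) = pmf G (y - a)"
      by (intro pmf_map_inj') (auto simp: inj_on_def)
    ultimately show ?thesis using True G by simp
  next
    case False
    then have "pmf (map_pmf ((+) a) G) y = 0"
      by (intro pmf_map_outside) auto
    with False show ?thesis by (simp add: B_def)
  qed
  then have AB: "emeasure M (A a \<inter> B a) = ennreal (pmf F a) * pmf (map_pmf ((+) a) G) y"
    for a using indep_sigma_of[OF assms(1) A B] F by (simp add: A_def)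
  have "{\<omega> \<in> space M. f \<omega> + g \<omega> = y} = (\<Union>a. A a \<inter> B a)"
    by (auto simp: A_def B_def)
  also have "emeasure M \<dots> = (\<integral>\<^sup>+a. emeasure M (A a \<inter> B a) \<partial>count_space UNIV)"
  proof (rule emeasure_UN_countable)
    show "A a \<inter> B a \<in> sets M" for a
      using A[of a] B[of a] sets_sigma_of_subset by blast
  qed (auto simp: disjoint_family_on_def A_def)
  also have "\<dots> = pmf (bind_pmf F (\<lambda>a. map_pmf ((+) a) G)) y"
    by (simp add: AB ennreal_pmf_bind nn_integral_measure_pmf)
  finally show ?thesis .
qed

lemma emeasure_X_eq_pmf:
  "emeasure M {\<omega> \<in> space M. g (X k i v \<omega>) = a} = pmf (map_pmf g (Xlaw k)) a"
proof -
  have "X k i v \<in> measurable M (count_space UNIV)"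
    using X_measurable_sigma_of[of k i v "{Inl (k, i, v)}" "\<lambda>x. x"]
    by (simp add: measurable_sigma_of_M)
  then have "emeasure M (X k i v -` (g -` {a}) \<inter> space M) =
      emeasure (measure_pmf (Xlaw k)) (g -` {a})"
    by (simp add: emeasure_distr flip: distr_X[of k i v])
  moreover have "{\<omega> \<in> space M. g (X k i v \<omega>) = a} = X k i v -` (g -` {a}) \<inter> space M"
    by auto
  ultimately show ?thesis
    by (simp add: map_pmf_rep_eq emeasure_distr flip: emeasure_pmf_single)
qed

lemma emeasure_CT_eq_pmf: "emeasure M {\<omega> \<in> space M. CT n \<omega> = lk} = pmf Q lk"
proof -
  have "CT n \<in> measurable M (count_space UNIV)"
    using CT_measurable_sigma_of[of n "{Inr n}"] by (simp add: measurable_sigma_of_M)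
  then have "emeasure M (CT n -` {lk} \<inter> space M) = emeasure (measure_pmf Q) {lk}"
    by (simp add: emeasure_distr flip: distr_CT[of n])
  moreover have "{\<omega> \<in> space M. CT n \<omega> = lk} = CT n -` {lk} \<inter> space M"
    by auto
  ultimately show ?thesis
    by (simp add: emeasure_pmf_single)
qed

lemma emeasure_sum_X_eq_sum_iid:
  "emeasure M {\<omega> \<in> space M. (\<Sum>i\<in>{1..z}. g (X k i v \<omega>)) = y} =
    pmf (sum_iid (map_pmf g (Xlaw k)) z) y"
proof (induction z arbitrary: y)
  case 0
  then show ?case by (auto simp: pmf_return indicator_def emeasure_space_1)
next
  case (Suc z)
  let ?S = "{Inl (k, Suc z, v)}" and ?T = "{Inl (k, i, v) | i. i \<in> {1..z}}"
  have f: "(\<lambda>\<omega>. g (X k (Suc z) v \<omega>)) \<in> measurable (sigma_of ?S) (count_space UNIV)"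
    by (rule X_measurable_sigma_of) simp
  have h: "(\<lambda>\<omega>. \<Sum>i\<in>{1..z}. g (X k i v \<omega>)) \<in> measurable (sigma_of ?T) (count_space UNIV)"
    by (intro measurable_count_space_sum X_measurable_sigma_of) blast+
  have "emeasure M {\<omega> \<in> space M. g (X k (Suc z) v \<omega>) + (\<Sum>i\<in>{1..z}. g (X k i v \<omega>)) = y}
      = pmf (sum_iid (map_pmf g (Xlaw k)) (Suc z)) y"
    using emeasure_add_eq_pmf_bind[OF _ f h emeasure_X_eq_pmf Suc.IH] by simp
  then show ?case by (simp add: add.commute)
qed

definition past :: "nat \<Rightarrow> ((nat \<times> nat \<times> nat list) + nat) set" where
  "past n = {Inl (k, i, v) | k i v. length v < n} \<union> {Inr m | m. m < n}"

lemma spineV_spineZ_measurable_past: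
  "m \<le> n \<Longrightarrow> spineV CT m \<in> measurable (sigma_of (past n)) (count_space UNIV) \<and>
     spineZ z0 X CT m \<in> measurable (sigma_of (past n)) (count_space UNIV)"
proof (induction m)
  case 0
  have "spineV CT 0 = (\<lambda>_. [])" "spineZ z0 X CT 0 = (\<lambda>_. z0)" by auto
  then show ?case by simp
next
  case (Suc m)
  let ?N = "sigma_of (past n)"
  have V: "spineV CT m \<in> measurable ?N (count_space UNIV)"
    and Z: "spineZ z0 X CT m \<in> measurable ?N (count_space UNIV)"
    using Suc by auto
  have C: "CT m \<in> measurable ?N (count_space UNIV)"
    using Suc.prems by (intro CT_measurable_sigma_of) (simp add: past_def)
  have V': "(\<lambda>\<omega>. spineV CT m \<omega> @ [fst (CT m \<omega>)]) \<in> measurable ?N (count_space UNIV)"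
    using measurable_count_space_comp[OF measurable_count_space_Pair[OF V C],
        of "\<lambda>(v, c). v @ [fst c]"] by simp
  define I :: "(nat \<times> (nat \<times> nat) \<times> nat list) set" where "I = {(z, c, v). length v = m}"
  have G: "(\<lambda>\<omega>. (spineZ z0 X CT m \<omega>, CT m \<omega>, spineV CT m \<omega>)) \<in> measurable ?N (count_space I)"
    using measurable_count_space_Pair[OF Z measurable_count_space_Pair[OF C V]]
    by (simp add: measurable_count_space_eq2_countable I_def Pi_iff length_spineV)
  have F: "(\<lambda>\<omega>. case t of (z, (l, k), v) \<Rightarrow> \<Sum>i\<in>{1..z}. xcomp (X k i v \<omega>) l)
      \<in> measurable ?N (count_space UNIV)" if "t \<in> I" for t
    using that Suc.prems
    by (auto simp: I_def past_def intro!: measurable_count_space_sum X_measurable_sigma_of)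
  have "(\<lambda>\<omega>. case (spineZ z0 X CT m \<omega>, CT m \<omega>, spineV CT m \<omega>) of (z, (l, k), v) \<Rightarrow>
      \<Sum>i\<in>{1..z}. xcomp (X k i v \<omega>) l) \<in> measurable ?N (count_space UNIV)"
    by (rule measurable_compose_countable'[OF F G countableI_type])
  with V' show ?case by (simp add: case_prod_beta)
qed

definition spine_path :: "nat \<Rightarrow> nat \<Rightarrow> 'a \<Rightarrow> nat list" where
  "spine_path z0 n \<omega> = map (\<lambda>m. spineZ z0 X CT m \<omega>) [0..<Suc n]"

lemma spine_path_measurable_past:
  "spine_path z0 n \<in> measurable (sigma_of (past n)) (count_space UNIV)"
  unfolding spine_path_def[abs_def]
  by (rule measurable_count_space_map) (use spineV_spineZ_measurable_past in auto)

lemma sets_spine_path_spineV: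
  "{\<omega> \<in> space M. spine_path z0 n \<omega> = zs \<and> spineV CT n \<omega> = v} \<in> sets (sigma_of (past n))"
proof -
  have "(\<lambda>\<omega>. (spine_path z0 n \<omega>, spineV CT n \<omega>)) \<in> measurable (sigma_of (past n)) (count_space UNIV)"
    using spineV_spineZ_measurable_past[of n n]
    by (intro measurable_count_space_Pair spine_path_measurable_past) auto
  from sets_Collect_count_space[OF this, of "\<lambda>(p, w). p = zs \<and> w = v"] show ?thesis
    by simp
qed

lemma emeasure_spine_step:
  "emeasure M {\<omega> \<in> space M. spine_path z0 n \<omega> = zs \<and> spineV CT n \<omega> = v \<and> CT n \<omega> = (l, k) \<and>
      (\<Sum>i\<in>{1..z}. xcomp (X k i v \<omega>) l) = y} =
    emeasure M {\<omega> \<in> space M. spine_path z0 n \<omega> = zs \<and> spineV CT n \<omega> = v} *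
      pmf Q (l, k) * pmf (sum_iid (marg Xlaw l k) z) y"
proof (cases "length v = n")
  case False
  then have "spineV CT n \<omega> \<noteq> v" for \<omega>
    using length_spineV[of CT n \<omega>] by auto
  then show ?thesis by simp
next
  case True
  define A where "A = {\<omega> \<in> space M. spine_path z0 n \<omega> = zs \<and> spineV CT n \<omega> = v}"
  define B where "B = {\<omega> \<in> space M. CT n \<omega> = (l, k)}"
  define C where "C = {\<omega> \<in> space M. (\<Sum>i\<in>{1..z}. xcomp (X k i v \<omega>) l) = y}"
  let ?Inl = "{Inl (k, i, v) | i. True}"
  have A: "A \<in> sets (sigma_of (past n))"
    unfolding A_def by (rule sets_spine_path_spineV)
  have B: "B \<in> sets (sigma_of {Inr n})"
    using sets_Collect_count_space[OF CT_measurable_sigma_of[of n "{Inr n}"]] by (simp add: B_def)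
  have "(\<lambda>\<omega>. \<Sum>i\<in>{1..z}. xcomp (X k i v \<omega>) l) \<in> measurable (sigma_of ?Inl) (count_space UNIV)"
    by (intro measurable_count_space_sum X_measurable_sigma_of) blast+
  from sets_Collect_count_space[OF this] have C: "C \<in> sets (sigma_of ?Inl)"
    by (simp add: C_def)
  have BC: "B \<inter> C \<in> sets (sigma_of ({Inr n} \<union> ?Inl))"
    using subsetD[OF sets_sigma_of_mono[OF Un_upper1] B]
      subsetD[OF sets_sigma_of_mono[OF Un_upper2] C]
    by (rule sets.Int)
  (* V_n = v and the path up to n depend on past n only, while CT n and the offspring vectors of
     the cell v of depth n do not belong to it. *)
  have "past n \<inter> ({Inr n} \<union> ?Inl) = {}"
    using True by (auto simp: past_def)
  from indep_sigma_of[OF this A BC] indep_sigma_of[OF _ B C]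
  have "emeasure M (A \<inter> (B \<inter> C)) = emeasure M A * (emeasure M B * emeasure M C)"
    by simp
  moreover have "emeasure M C = pmf (sum_iid (marg Xlaw l k) z) y"
    using emeasure_sum_X_eq_sum_iid[of "\<lambda>xs. xcomp xs l"] by (simp add: C_def marg_def)
  moreover have "A \<inter> (B \<inter> C) = {\<omega> \<in> space M. spine_path z0 n \<omega> = zs \<and> spineV CT n \<omega> = v \<and>
      CT n \<omega> = (l, k) \<and> (\<Sum>i\<in>{1..z}. xcomp (X k i v \<omega>) l) = y}"
    by (auto simp: A_def B_def C_def)
  ultimately show ?thesis
    by (simp add: B_def emeasure_CT_eq_pmf A_def mult.assoc)
qed

lemma ennreal_pmf_bind_env:
  "ennreal (pmf (bind_pmf env (\<lambda>L. sum_iid L z)) y) =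
    (\<integral>\<^sup>+(l, k). ennreal (pmf Q (l, k)) * pmf (sum_iid (marg Xlaw l k) z) y \<partial>count_space UNIV)"
proof -
  have "ennreal (pmf (bind_pmf env (\<lambda>L. sum_iid L z)) y) =
      (\<integral>\<^sup>+(l, k). pmf (sum_iid (marg Xlaw l k) z) y \<partial>Q)"
    by (simp add: env_def ennreal_pmf_bind case_prod_beta)
  also have "\<dots> = (\<integral>\<^sup>+lk. ennreal (pmf Q lk) * (case lk of (l, k) \<Rightarrow> pmf (sum_iid (marg Xlaw l k) z) y)
      \<partial>count_space UNIV)"
    by (rule nn_integral_measure_pmf)
  finally show ?thesis
    by (simp add: split_beta')
qed

lemma spine_path_Suc:
  "spine_path z0 (Suc n) \<omega> = spine_path z0 n \<omega> @ [spineZ z0 X CT (Suc n) \<omega>]"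
  unfolding spine_path_def by simp

lemma last_spine_path: "last (spine_path z0 n \<omega>) = spineZ z0 X CT n \<omega>"
  unfolding spine_path_def by simp

lemma emeasure_spine_path_snoc:
  "emeasure M {\<omega> \<in> space M. spine_path z0 (Suc n) \<omega> = zs @ [y]} =
    emeasure M {\<omega> \<in> space M. spine_path z0 n \<omega> = zs} * pmf (bind_pmf env (\<lambda>L. sum_iid L (last zs))) y"
proof -
  define A where "A v = {\<omega> \<in> space M. spine_path z0 n \<omega> = zs \<and> spineV CT n \<omega> = v}" for v
  define E where "E v lk = {\<omega> \<in> space M. spine_path z0 n \<omega> = zs \<and> spineV CT n \<omega> = v \<and> CT n \<omega> = lk \<and>
      (\<Sum>i\<in>{1..last zs}. xcomp (X (snd lk) i v \<omega>) (fst lk)) = y}" for v lk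
  have A: "A v \<in> sets M" for v
    using sets_spine_path_spineV sets_sigma_of_subset unfolding A_def by blast
  have E: "E v lk \<in> sets M" for v lk
  proof -
    have "(\<lambda>\<omega>. (CT n \<omega>, \<Sum>i\<in>{1..last zs}. xcomp (X (snd lk) i v \<omega>) (fst lk)))
        \<in> measurable (sigma_of UNIV) (count_space UNIV)"
      by (intro measurable_count_space_Pair measurable_count_space_sum CT_measurable_sigma_of
          X_measurable_sigma_of) simp_all
    from sets_Collect_count_space[OF this, of "\<lambda>(c, s). c = lk \<and> s = y"]
    have "{\<omega> \<in> space M. CT n \<omega> = lk \<and> (\<Sum>i\<in>{1..last zs}. xcomp (X (snd lk) i v \<omega>) (fst lk)) = y}
        \<in> sets M"
      using sets_sigma_of_subset by auto
    moreover have "E v lk = A v \<inter> {\<omega> \<in> space M. CT n \<omega> = lk \<and>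
        (\<Sum>i\<in>{1..last zs}. xcomp (X (snd lk) i v \<omega>) (fst lk)) = y}"
      by (auto simp: A_def E_def)
    ultimately show ?thesis
      using A by simp
  qed
  have E_eq: "emeasure M (E v lk) = emeasure M (A v) * pmf Q lk *
      pmf (sum_iid (marg Xlaw (fst lk) (snd lk)) (last zs)) y" for v lk
    by (cases lk) (simp only: E_def A_def fst_conv snd_conv emeasure_spine_step)
  have "{\<omega> \<in> space M. spine_path z0 (Suc n) \<omega> = zs @ [y]} = (\<Union>v. \<Union>lk. E v lk)"
    by (auto simp: E_def spine_path_Suc simp flip: last_spine_path)
  also have "emeasure M \<dots> = (\<integral>\<^sup>+v. emeasure M (\<Union>lk. E v lk) \<partial>count_space UNIV)"
    using E by (intro emeasure_UN_countable) (auto simp: disjoint_family_on_def E_def)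
  also have "\<dots> = (\<integral>\<^sup>+v. \<integral>\<^sup>+lk. emeasure M (E v lk) \<partial>count_space UNIV \<partial>count_space UNIV)"
    using E by (intro nn_integral_cong emeasure_UN_countable) (auto simp: disjoint_family_on_def E_def)
  also have "\<dots> = (\<integral>\<^sup>+v. emeasure M (A v) * pmf (bind_pmf env (\<lambda>L. sum_iid L (last zs))) y
      \<partial>count_space UNIV)"
    by (simp add: E_eq ennreal_pmf_bind_env split_beta' mult.assoc nn_integral_cmult)
  also have "\<dots> = (\<integral>\<^sup>+v. emeasure M (A v) \<partial>count_space UNIV) *
      pmf (bind_pmf env (\<lambda>L. sum_iid L (last zs))) y"
    by (rule nn_integral_multc) simp
  also have "(\<integral>\<^sup>+v. emeasure M (A v) \<partial>count_space UNIV) = emeasure M (\<Union>v. A v)"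
    using A by (intro emeasure_UN_countable[symmetric]) (auto simp: disjoint_family_on_def A_def)
  also have "(\<Union>v. A v) = {\<omega> \<in> space M. spine_path z0 n \<omega> = zs}"
    by (auto simp: A_def)
  finally show ?thesis .
qed

lemma emeasure_spine_path: "emeasure M {\<omega> \<in> space M. spine_path z0 n \<omega> = zs} = pmf (bpre_law env z0 n) zs"
proof (induction n arbitrary: zs)
  case 0
  have "bpre_law env z0 0 = return_pmf [z0]"
    by (simp add: bpre_law_def bind_return_pmf)
  then show ?case
    by (auto simp: spine_path_def pmf_return indicator_def emeasure_space_1)
next
  case (Suc n)
  show ?case
  proof (cases zs rule: rev_cases)
    case Nil
    have "spine_path z0 (Suc n) \<omega> \<noteq> []" for \<omega>
      by (simp add: spine_path_def)
    then show ?thesis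
      by (simp add: Nil bpre_law_Suc pmf_bind_snoc_Nil)
  next
    case (snoc ys y)
    show ?thesis
      unfolding snoc emeasure_spine_path_snoc bpre_law_Suc pmf_bind_snoc Suc.IH ..
  qed
qed

lemma distr_spine_path: "distr M (count_space UNIV) (spine_path z0 n) = measure_pmf (bpre_law env z0 n)"
proof (rule measure_eqI_countable[where A=UNIV])
  fix zs
  have "spine_path z0 n \<in> measurable M (count_space UNIV)"
    using spine_path_measurable_past by (rule measurable_sigma_of_M)
  moreover have "spine_path z0 n -` {zs} \<inter> space M = {\<omega> \<in> space M. spine_path z0 n \<omega> = zs}"
    by blast
  ultimately show "emeasure (distr M (count_space UNIV) (spine_path z0 n)) {zs} =
      emeasure (measure_pmf (bpre_law env z0 n)) {zs}"
    by (simp add: emeasure_distr emeasure_spine_path emeasure_pmf_single)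
qed simp_all

end

theorem lemma1:
  fixes M :: "'a measure"
    and p :: "nat pmf"
    and Xlaw :: "nat \<Rightarrow> nat list pmf"
    and X :: "nat \<Rightarrow> nat \<Rightarrow> nat list \<Rightarrow> 'a \<Rightarrow> nat list"
    and CT :: "nat \<Rightarrow> 'a \<Rightarrow> nat \<times> nat"
    and \<nu> :: real
    and z0 :: nat
    and e :: "nat pmf pmf"
  assumes "prob_space M"
    and Xlaw_len: "\<And>k. set_pmf (Xlaw k) \<subseteq> {xs. length xs = k}"
    and nu_finite: "integrable (measure_pmf p) real"
    and nu_def: "\<nu> = measure_pmf.expectation p real"
    and gamma_pos: "0 < gamma p Xlaw"
    and gamma_fin: "gamma p Xlaw < \<infinity>"
    and indep: "prob_space.indep_vars M (\<lambda>_. count_space UNIV) (allvars X CT) UNIV"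
    and X_law: "\<And>k i v. distr M (count_space UNIV) (X k i v) = measure_pmf (Xlaw k)"
    and CT_law: "\<And>n l k. measure M {\<omega> \<in> space M. CT n \<omega> = (l, k)} =
        (if 1 \<le> l \<and> l \<le> k then (real k * pmf p k / \<nu>) * (1 / real k) else 0)"
    and env_law: "\<And>L. pmf e L =
        (\<Sum>\<^sub>\<infinity>(j, k) \<in> {(j, k). 1 \<le> j \<and> j \<le> k \<and> marg Xlaw j k = L}. pmf p k / \<nu>)"
  shows "\<forall>n. distr M (count_space UNIV) (\<lambda>\<omega>. map (\<lambda>m. spineZ z0 X CT m \<omega>) [0..<Suc n])
             = measure_pmf (bpre_law e z0 n)"
proof -
  interpret prob_space M by fact
  define w where "w = (\<lambda>(l, k). if 1 \<le> l \<and> l \<le> k then pmf p k / \<nu> else 0)"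
  have "allvars X CT (Inr n) \<in> measurable M (count_space UNIV)" for n
    using indep unfolding indep_vars_def2 by blast
  from measurable_count_space_comp[OF this, of projr]
  have CT_measurable: "CT n \<in> measurable M (count_space UNIV)" for n
    by simp
  have "measure M {\<omega> \<in> space M. CT n \<omega> = lk} = w lk" for n lk
    by (cases lk) (simp add: CT_law w_def)
  note Q = distr_count_space_eq_embed_pmf[OF CT_measurable this]
  interpret spine_model M X CT Xlaw "embed_pmf w"
    using indep X_law Q(1) by unfold_locales
  let ?P = "\<lambda>(l, k). 1 \<le> l \<and> l \<le> k" and ?g = "\<lambda>(l, k). marg Xlaw l k"
  have "pmf (embed_pmf w) lk = (if ?P lk then w lk else 0)" for lk
    unfolding Q(2) by (simp add: w_def split: prod.split)
  moreover have "pmf e L = (\<Sum>\<^sub>\<infinity>lk \<in> {lk. ?P lk \<and> ?g lk = L}. w lk)" for L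
    unfolding env_law by (intro infsum_cong_neutral) (auto simp: w_def)
  ultimately have "e = env"
    unfolding env_def by (rule map_pmf_eq_of_weights)
  then show ?thesis
    using distr_spine_path by (simp add: spine_path_def[abs_def])
qed

end
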